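(* In the setting described in the context, let $\rho\in\widehat\Lambda$, $\chi\in\widehat\Gamma$, $1\le i,i_1,\dots,i_t\le n$ with $t\ge1$, and $u=u_{i_1}\cdots u_{i_t}$. Then, in the left $U$-module $A^*$ with action $\cdot_\rho$, (a) $u_i\cdot_\rho\widetilde\chi=(1-\rho(z_i)\chi(g_i))\,\Phi(u_i)\widetilde\chi$; (b) $u_i\cdot_\rho(\Phi(u)\widetilde\chi)=\Phi\Big(u_iu-\prod_{r=1}^t q_{ii_r}\,\rho(z_i)\chi(g_i)\,uu_i\Big)\widetilde\chi$; (c) $u_i^t\cdot_\rho\widetilde\chi=\prod_{l=0}^{t-1}\big(1-q_{ii}^l\rho(z_i)\chi(g_i)\big)\,\Phi(u_i^t)\widetilde\chi$.
   Context: $k$ is an algebraically closed field of characteristic zero; for an abelian group $G$, $\widehat G$ is its group of characters $G\to k^\times$. A Yetter–Drinfeld module over $k[G]$ is a $G$-graded vector space $X=\bigoplus_g X_g$ with a $G$-action preserving each $X_g$; $X_g^{\psi}=\{x\in X_g: h\cdot x=\psi(h)x\ \forall h\}$; braiding $c(x\otimes y)=(g\cdot y)\otimes x$ for $x\in X_g$. The Nichols algebra $\mathfrak B(X)$ is the unique connected $\mathbb N$-graded braided Hopf algebra in this category generated by its degree-one part $\cong X$, which equals its space of primitive elements. The smash product $\mathfrak B(X)\#k[G]$ is the Hopf algebra containing $\mathfrak B(X)$ and $k[G]$ as subalgebras, with $gxg^{-1}=\psi(g)x$, $\Delta(x)=g'\otimes x+x\otimes1$ for $x\in X_{g'}^{\psi}$,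 and $\Delta(g)=g\otimes g$. Setting: $\Lambda,\Gamma$ abelian groups, $n\ge1$, $z_1,\dots,z_n\in\Lambda$, $g_1,\dots,g_n\in\Gamma$, nontrivial characters $\eta_1,\dots,\eta_n\in\widehat\Lambda$, $\chi_1,\dots,\chi_n\in\widehat\Gamma$. $W$ is the Yetter–Drinfeld module over $k[\Lambda]$ with basis $u_i\in W_{z_i}^{\eta_i}$, $V$ the one over $k[\Gamma]$ with basis $a_i\in V_{g_i}^{\chi_i}$; $U=\mathfrak B(W)\#k[\Lambda]$, $A=\mathfrak B(V)\#k[\Gamma]$; $q_{ij}=\eta_j(z_i)$. For $\psi\in\widehat\Gamma$ (resp. $\widehat\Lambda$), $\widetilde\psi$ is the algebra map $A\to k$ (resp. $U\to k$) with $\widetilde\psi(g)=\psi(g)$ and vanishing on the $a_j$ (resp. $u_j$). Let $\varphi:\Lambda\to\widehat\Gamma$ be a group homomorphism with $\varphi(z_i)=\chi_i^{-1}$ and $\eta_i(z)=\varphi(z)(g_i)$ for all $i$ and $z\in\Lambda$, and let $l_1,\dots,l_n\in k$ be nonzero. Then there is a Hopf algebra map $\Phi:U\to A^{o\,\mathrm{cop}}$ with $\Phi(z)=\widetilde{\varphi(z)}$, $\Phi(u_i)(g)=0$, $\Phi(u_i)(a_j)=\delta_{ij}l_i$. The dual $A^*$ is an algebra under convolution $(pq)(a)=p(a_{(1)})q(a_{(2)})$ (so $\Phi(u)\widetilde\chi$ is a product in $A^*$). For $\rho\in\widehat\Lambda$, $U$ acts on $A^*$ by $u\cdot_\rho p=\Phi(u_{(1)})\,\widetilde\rho(u_{(2)})\,p\,\Phi(S(u_{(3)}))$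 (products in $A^*$). *)

theory Defs
  imports "HOL-Computational_Algebra.Polynomial"
begin

text \<open>Groups Lambda, Gamma are written additively (type class ab_group_add).
  A character of an abelian group with values in k^x.\<close>

definition is_char :: "('a::ab_group_add \<Rightarrow> 'k::field) \<Rightarrow> bool" where
  "is_char \<psi> \<longleftrightarrow> (\<forall>x y. \<psi> (x + y) = \<psi> x * \<psi> y) \<and> (\<forall>x. \<psi> x \<noteq> 0)"

text \<open>Coproduct of the basis element a_w (w a word in the generators) of the smash
  product T(V)#k[G], with a_j of degree gg j and weight ch j:
  Delta(a_w) = sum of c * (a_w1 * s) (x) a_w2 over the listed quadruples (c, w1, s, w2).\<close>

fun cop :: "('i \<Rightarrow> 'g::ab_group_add) \<Rightarrow> ('i \<Rightarrow> 'g \<Rightarrow> 'k::comm_ring_1) \<Rightarrow> 'i list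
             \<Rightarrow> ('k \<times> 'i list \<times> 'g \<times> 'i list) list" where
  "cop gg ch [] = [(1, [], 0, [])]"
| "cop gg ch (x # w) =
     map (\<lambda>(c, w1, s, w2). (c * prod_list (map (\<lambda>y. ch y (gg x)) w1), w1, gg x + s, x # w2))
         (cop gg ch w)
   @ map (\<lambda>(c, w1, s, w2). (c, x # w1, s, w2)) (cop gg ch w)"

text \<open>A linear functional p on the smash product is given by its values p w h = p(a_w h)
  on the basis {a_w h}. Convolution product of functionals.\<close>

definition conv :: "('i \<Rightarrow> 'g::ab_group_add) \<Rightarrow> ('i \<Rightarrow> 'g \<Rightarrow> 'k::comm_ring_1)
    \<Rightarrow> ('i list \<Rightarrow> 'g \<Rightarrow> 'k) \<Rightarrow> ('i list \<Rightarrow> 'g \<Rightarrow> 'k) \<Rightarrow> ('i list \<Rightarrow> 'g \<Rightarrow> 'k)" where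
  "conv gg ch p q = (\<lambda>w h. sum_list (map (\<lambda>(c, w1, s, w2). c * p w1 (s + h) * q w2 h) (cop gg ch w)))"

definition unit_f :: "'i list \<Rightarrow> 'g \<Rightarrow> 'k::comm_ring_1" where
  "unit_f w h = (if w = [] then 1 else 0)"

definition tilde :: "('g \<Rightarrow> 'k::comm_ring_1) \<Rightarrow> 'i list \<Rightarrow> 'g \<Rightarrow> 'k" where
  "tilde \<psi> w h = (if w = [] then \<psi> h else 0)"

definition smultf :: "'k::comm_ring_1 \<Rightarrow> ('i list \<Rightarrow> 'g \<Rightarrow> 'k) \<Rightarrow> 'i list \<Rightarrow> 'g \<Rightarrow> 'k" where
  "smultf c p = (\<lambda>w h. c * p w h)"

definition prodf :: "('i \<Rightarrow> 'g::ab_group_add) \<Rightarrow> ('i \<Rightarrow> 'g \<Rightarrow> 'k::comm_ring_1)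
    \<Rightarrow> ('i list \<Rightarrow> 'g \<Rightarrow> 'k) list \<Rightarrow> 'i list \<Rightarrow> 'g \<Rightarrow> 'k" where
  "prodf gg ch ps = foldr (conv gg ch) ps unit_f"

text \<open>Phi on the basis element u_w * lam of U (Phi is an algebra map; Phiu j = Phi(u_j),
  Phi(lam) = tilde (phi lam)).\<close>
definition PhiU where
  "PhiU gg ch \<phi> Phiu w lam = conv gg ch (prodf gg ch (map Phiu w)) (tilde (\<phi> lam))"

text \<open>Phi(S(u_w lam)), where S(u_w lam) = lam^{-1} S(u_wm) ... S(u_w1) and
  S(u_j) = - z_j^{-1} u_j.\<close>
definition PhiSU where
  "PhiSU gg ch zs \<phi> Phiu w lam =
     smultf ((-1) ^ length w)
       (conv gg ch (tilde (\<phi> (- lam)))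
          (prodf gg ch (map (\<lambda>j. conv gg ch (tilde (\<phi> (- zs j))) (Phiu j)) (rev w))))"

text \<open>Phi applied to a linear combination of basis elements u_w lam of U.\<close>
definition PhiComb where
  "PhiComb gg ch \<phi> Phiu X = (\<lambda>x h. sum_list (map (\<lambda>(c, w, lam). c * PhiU gg ch \<phi> Phiu w lam x h) X))"

text \<open>The action u .rho p = Phi(u(1)) tilde rho (u(2)) p Phi(S(u(3))) for u = u_w lam,
  using Delta^(2) = (Delta (x) id) Delta on U = B(W)#k[Lambda].\<close>
definition act_term where
  "act_term gg ch zs et \<phi> Phiu \<rho> w lam p = (\<lambda>x h.
     sum_list (map (\<lambda>(c1, w1, s, w2).
       sum_list (map (\<lambda>(c2, v1, s2, v2).
          c1 * c2 * (if v2 = [] then \<rho> (s + lam) else 0) *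
          conv gg ch (conv gg ch (PhiU gg ch \<phi> Phiu v1 (s2 + s + lam)) p)
                     (PhiSU gg ch zs \<phi> Phiu w2 lam) x h)
         (cop zs et w1)))
      (cop zs et w)))"

definition act where
  "act gg ch zs et \<phi> Phiu \<rho> X p =
     (\<lambda>x h. sum_list (map (\<lambda>(c, w, lam). c * act_term gg ch zs et \<phi> Phiu \<rho> w lam p x h) X))"

end

(* In the convolution algebra A^* a character tilde psi commutes with a functional supported
   in Gamma-degree d up to the scalar psi(d).  Phi(u_j) is supported on the words a_j, so it has
   degree g_j, and Phi(z) = tilde (phi z) moves past Phi(u_w) at the cost of the factor
   prod_r eta_(w_r)(z).  Since Delta(u_i) = z_i (x) u_i + u_i (x) 1 and S(u_i) = - z_i^-1 u_i, a
   generator acts by  u_i . p = Phi(u_i) p - rho(z_i) Phi(z_i) p Phi(z_i^-1 u_i);  for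
   p = Phi(u) tilde chi, commuting the characters to the right gives (b).  As the action is a
   module action, (c) follows from (b) by induction on t, and (a) is the case t = 1 of (c). *)

theory Submission
  imports Defs
begin

subsection \<open>Coproduct of words\<close>

lemma prod_list_map_shuffles:
  fixes f :: "'a \<Rightarrow> 'b::comm_monoid_mult"
  assumes "w \<in> shuffles u v"
  shows "prod_list (map f w) = prod_list (map f u) * prod_list (map f v)"
  by (simp add: mset_shuffles[OF assms] flip: prod_mset_prod_list)

lemma sum_list_map_shuffles:
  fixes f :: "'a \<Rightarrow> 'b::comm_monoid_add"
  assumes "w \<in> shuffles u v"
  shows "sum_list (map f w) = sum_list (map f u) + sum_list (map f v)"
  by (simp add: mset_shuffles[OF assms] flip: sum_mset_sum_list)

lemma cop_in_shuffles: "(c, w1, s, w2) \<in> set (cop gg ch w) \<Longrightarrow> w \<in> shuffles w1 w2"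
  by (induction w arbitrary: c w1 s w2) (auto intro: Cons_in_shuffles_leftI Cons_in_shuffles_rightI)

lemma sum_list_cop_right_Nil:
  "sum_list (map (\<lambda>(c, w1, s, w2). if w2 = [] then G c w1 s else 0) (cop gg ch w)) = G 1 w 0"
proof (induction w arbitrary: G)
  case Nil
  then show ?case by simp
next
  case (Cons x w)
  have "sum_list (map (\<lambda>(c, w1, s, w2). if w2 = [] then G c w1 s else 0) (cop gg ch (x # w)))
      = sum_list (map (\<lambda>(c, w1, s, w2). if w2 = [] then G c (x # w1) s else 0) (cop gg ch w))"
    by (simp add: map_map o_def case_prod_unfold cong: if_cong)
  with Cons.IH[of "\<lambda>c v s. G c (x # v) s"] show ?case by simp
qed

lemma sum_list_cop_left_Nil:
  "sum_list (map (\<lambda>(c, w1, s, w2). if w1 = [] then G c s w2 else 0) (cop gg ch w))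
     = G 1 (sum_list (map gg w)) w"
proof (induction w arbitrary: G)
  case Nil
  then show ?case by simp
next
  case (Cons x w)
  have "sum_list (map (\<lambda>(c, w1, s, w2). if w1 = [] then G c s w2 else 0) (cop gg ch (x # w)))
      = sum_list (map (\<lambda>(c, w1, s, w2). if w1 = [] then G c (gg x + s) (x # w2) else 0) (cop gg ch w))"
    by (simp add: map_map o_def case_prod_unfold cong: if_cong)
  with Cons.IH[of "\<lambda>c s v. G c (gg x + s) (x # v)"] show ?case by simp
qed

subsection \<open>The convolution algebra\<close>

definition word_char :: "('i \<Rightarrow> 'g \<Rightarrow> 'k::comm_ring_1) \<Rightarrow> 'i list \<Rightarrow> 'g \<Rightarrow> 'k" where
  "word_char ch u g = prod_list (map (\<lambda>y. ch y g) u)"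

lemma conv_Cons:
  "conv gg ch p q (x # w) h =
     conv gg ch (\<lambda>u h. word_char ch u (gg x) * p u (gg x + h)) (\<lambda>u h. q (x # u) h) w h
   + conv gg ch (\<lambda>u h. p (x # u) h) q w h"
  by (simp add: conv_def word_char_def map_map o_def case_prod_unfold algebra_simps)

lemma conv_translate:
  "word_char ch w g * conv gg ch p q w (g + h) =
     conv gg ch (\<lambda>u h. word_char ch u g * p u (g + h)) (\<lambda>u h. word_char ch u g * q u (g + h)) w h"
  unfolding conv_def sum_list_const_mult[symmetric]
proof (intro arg_cong[where f=sum_list] map_cong refl, clarify)
  fix c w1 s w2
  assume "(c, w1, s, w2) \<in> set (cop gg ch w)"
  then have "word_char ch w g = word_char ch w1 g * word_char ch w2 g"
    unfolding word_char_def by (intro prod_list_map_shuffles cop_in_shuffles)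
  then show "word_char ch w g * (c * p w1 (s + (g + h)) * q w2 (g + h)) =
      c * (word_char ch w1 g * p w1 (g + (s + h))) * (word_char ch w2 g * q w2 (g + h))"
    by (simp add: algebra_simps)
qed

lemma conv_add_left:
  "conv gg ch (\<lambda>u h. p u h + p' u h) q = (\<lambda>w h. conv gg ch p q w h + conv gg ch p' q w h)"
  by (simp add: conv_def fun_eq_iff case_prod_unfold algebra_simps sum_list_addf)

lemma conv_add_right:
  "conv gg ch q (\<lambda>u h. p u h + p' u h) = (\<lambda>w h. conv gg ch q p w h + conv gg ch q p' w h)"
  by (simp add: conv_def fun_eq_iff case_prod_unfold algebra_simps sum_list_addf)

lemma conv_sum_list_left:
  "conv gg ch (\<lambda>u h. sum_list (map (\<lambda>e. F e u h) L)) r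
     = (\<lambda>u h. sum_list (map (\<lambda>e. conv gg ch (F e) r u h) L))"
  by (induction L) (simp_all add: conv_add_left, simp add: conv_def fun_eq_iff case_prod_unfold)

lemma conv_sum_list_right:
  "conv gg ch r (\<lambda>u h. sum_list (map (\<lambda>e. F e u h) L))
     = (\<lambda>u h. sum_list (map (\<lambda>e. conv gg ch r (F e) u h) L))"
  by (induction L) (simp_all add: conv_add_right, simp add: conv_def fun_eq_iff case_prod_unfold)

lemma conv_smultf_left: "conv gg ch (smultf a p) q = smultf a (conv gg ch p q)"
  by (simp add: conv_def smultf_def fun_eq_iff case_prod_unfold sum_list_const_mult[symmetric]
      algebra_simps)

lemma conv_smultf_right: "conv gg ch p (smultf a q) = smultf a (conv gg ch p q)"
  by (simp add: conv_def smultf_def fun_eq_iff case_prod_unfold sum_list_const_mult[symmetric]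
      algebra_simps)

lemma conv_uminus_right: "conv gg ch p (\<lambda>w h. - q w h) = (\<lambda>w h. - conv gg ch p q w h)"
  using conv_smultf_right[of gg ch p "-1" q] by (simp add: smultf_def)

lemma smultf_smultf: "smultf a (smultf b f) = smultf (a * b) f"
  by (simp add: smultf_def fun_eq_iff)

lemma smultf_1: "smultf 1 f = f"
  by (simp add: smultf_def fun_eq_iff)

lemma conv_assoc_pointwise:
  "conv gg ch (conv gg ch p q) r w h = conv gg ch p (conv gg ch q r) w h"
proof (induction w arbitrary: p q r h)
  case Nil
  then show ?case by (simp add: conv_def)
next
  case (Cons x w)
  define p1 where "p1 = (\<lambda>u h. p (x # u) h)"
  define p2 where "p2 = (\<lambda>u h. word_char ch u (gg x) * p u (gg x + h))"
  define q2 where "q2 = (\<lambda>u h. q (x # u) h)"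
  define q3 where "q3 = (\<lambda>u h. word_char ch u (gg x) * q u (gg x + h))"
  define r3 where "r3 = (\<lambda>u h. r (x # u) h)"
  have "conv gg ch (conv gg ch p q) r (x # w) h =
      conv gg ch (\<lambda>u h. word_char ch u (gg x) * conv gg ch p q u (gg x + h)) r3 w h
      + conv gg ch (\<lambda>u h. conv gg ch p q (x # u) h) r w h"
    unfolding r3_def by (rule conv_Cons)
  also have "(\<lambda>u h. word_char ch u (gg x) * conv gg ch p q u (gg x + h)) = conv gg ch p2 q3"
    unfolding p2_def q3_def by (simp add: conv_translate)
  also have "(\<lambda>u h. conv gg ch p q (x # u) h) = (\<lambda>u h. conv gg ch p2 q2 u h + conv gg ch p1 q u h)"
    unfolding p1_def p2_def q2_def by (simp add: conv_Cons)
  finally have left: "conv gg ch (conv gg ch p q) r (x # w) h =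
      conv gg ch (conv gg ch p2 q3) r3 w h
      + (conv gg ch (conv gg ch p2 q2) r w h + conv gg ch (conv gg ch p1 q) r w h)"
    by (simp add: conv_add_left)
  have "conv gg ch p (conv gg ch q r) (x # w) h =
      conv gg ch p2 (\<lambda>u h. conv gg ch q r (x # u) h) w h + conv gg ch p1 (conv gg ch q r) w h"
    unfolding p1_def p2_def by (rule conv_Cons)
  also have "(\<lambda>u h. conv gg ch q r (x # u) h) = (\<lambda>u h. conv gg ch q3 r3 u h + conv gg ch q2 r u h)"
    unfolding q2_def q3_def r3_def by (simp add: conv_Cons)
  finally have right: "conv gg ch p (conv gg ch q r) (x # w) h =
      conv gg ch p2 (conv gg ch q3 r3) w h
      + (conv gg ch p2 (conv gg ch q2 r) w h + conv gg ch p1 (conv gg ch q r) w h)"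
    by (simp add: conv_add_right)
  show ?case unfolding left right Cons.IH ..
qed

lemma conv_assoc: "conv gg ch (conv gg ch p q) r = conv gg ch p (conv gg ch q r)"
  by (simp add: fun_eq_iff conv_assoc_pointwise)

lemma conv_tilde_left: "conv gg ch (tilde \<psi>) f w h = \<psi> (sum_list (map gg w) + h) * f w h"
proof -
  have "conv gg ch (tilde \<psi>) f w h =
      sum_list (map (\<lambda>(c, w1, s, w2). if w1 = [] then c * \<psi> (s + h) * f w2 h else 0) (cop gg ch w))"
    unfolding conv_def tilde_def by (intro arg_cong[where f=sum_list] map_cong refl) auto
  then show ?thesis by (simp add: sum_list_cop_left_Nil[where G="\<lambda>c s v. c * \<psi> (s + h) * f v h"])
qed

lemma conv_tilde_right: "conv gg ch f (tilde \<psi>) w h = f w h * \<psi> h"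
proof -
  have "conv gg ch f (tilde \<psi>) w h =
      sum_list (map (\<lambda>(c, w1, s, w2). if w2 = [] then c * f w1 (s + h) * \<psi> h else 0) (cop gg ch w))"
    unfolding conv_def tilde_def by (intro arg_cong[where f=sum_list] map_cong refl) auto
  then show ?thesis by (simp add: sum_list_cop_right_Nil[where G="\<lambda>c v s. c * f v (s + h) * \<psi> h"])
qed

lemma unit_f_eq_tilde: "unit_f = tilde (\<lambda>_. 1)"
  by (simp add: fun_eq_iff unit_f_def tilde_def)

lemma conv_unit_f_left: "conv gg ch unit_f f = f"
  by (simp add: fun_eq_iff unit_f_eq_tilde conv_tilde_left)

lemma conv_unit_f_right: "conv gg ch f unit_f = f"
  by (simp add: fun_eq_iff unit_f_eq_tilde conv_tilde_right)

lemma conv_tilde_tilde: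
  "conv gg ch (tilde \<psi>) (conv gg ch (tilde \<theta>) f) = conv gg ch (tilde (\<lambda>x. \<psi> x * \<theta> x)) f"
proof -
  have "conv gg ch (tilde \<psi>) (tilde \<theta>) = tilde (\<lambda>x. \<psi> x * \<theta> x)"
    by (simp add: fun_eq_iff conv_tilde_right tilde_def)
  then show ?thesis by (simp only: conv_assoc[symmetric])
qed

lemma prodf_Nil: "prodf gg ch [] = unit_f"
  by (simp add: prodf_def)

lemma prodf_Cons: "prodf gg ch (p # ps) = conv gg ch p (prodf gg ch ps)"
  by (simp add: prodf_def)

lemma prodf_single: "prodf gg ch [p] = p"
  by (simp add: prodf_Cons prodf_Nil conv_unit_f_right)

lemma prodf_append: "prodf gg ch (ps @ qs) = conv gg ch (prodf gg ch ps) (prodf gg ch qs)"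
  by (induction ps) (simp_all add: prodf_Cons prodf_Nil conv_unit_f_left conv_assoc)

subsection \<open>Homogeneous functionals\<close>

definition homogeneous :: "('i \<Rightarrow> 'g::ab_group_add) \<Rightarrow> 'g \<Rightarrow> ('i list \<Rightarrow> 'g \<Rightarrow> 'k::zero) \<Rightarrow> bool" where
  "homogeneous gg d f \<longleftrightarrow> (\<forall>w h. f w h \<noteq> 0 \<longrightarrow> sum_list (map gg w) = d)"

lemma homogeneous_conv:
  assumes "homogeneous gg d1 p" "homogeneous gg d2 q"
  shows "homogeneous gg (d1 + d2) (conv gg ch p q)"
  unfolding homogeneous_def
proof (intro allI impI)
  fix w h
  assume nonzero: "conv gg ch p q w h \<noteq> 0"
  show "sum_list (map gg w) = d1 + d2"
  proof (rule ccontr)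
    assume deg: "sum_list (map gg w) \<noteq> d1 + d2"
    have zero: "c * p w1 (s + h) * q w2 h = 0" if "(c, w1, s, w2) \<in> set (cop gg ch w)" for c w1 s w2
      using sum_list_map_shuffles[OF cop_in_shuffles[OF that], of gg] deg assms
      unfolding homogeneous_def by (cases "p w1 (s + h) = 0"; cases "q w2 h = 0") auto
    have "conv gg ch p q w h = sum_list (map (\<lambda>_. 0) (cop gg ch w))"
      unfolding conv_def by (intro arg_cong[where f=sum_list] map_cong refl, clarify, simp add: zero)
    with nonzero show False by simp
  qed
qed

lemma homogeneous_unit_f: "homogeneous gg 0 unit_f"
  by (simp add: homogeneous_def unit_f_def)

lemma homogeneous_prodf:
  assumes "\<And>j. homogeneous gg (gs j) (F j)"
  shows "homogeneous gg (sum_list (map gs w)) (prodf gg ch (map F w))"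
  by (induction w) (simp_all add: prodf_Cons prodf_Nil homogeneous_unit_f homogeneous_conv assms)

lemma tilde_conv_commute:
  assumes "homogeneous gg d f" and "\<And>a b. \<psi> (a + b) = \<psi> a * \<psi> b"
  shows "conv gg ch (tilde \<psi>) f = smultf (\<psi> d) (conv gg ch f (tilde \<psi>))"
proof (intro ext)
  fix w h
  show "conv gg ch (tilde \<psi>) f w h = smultf (\<psi> d) (conv gg ch f (tilde \<psi>)) w h"
  proof (cases "f w h = 0")
    case True
    then show ?thesis by (simp add: conv_tilde_left conv_tilde_right smultf_def)
  next
    case False
    with assms(1) have "sum_list (map gg w) = d" by (auto simp: homogeneous_def)
    then show ?thesis by (simp add: conv_tilde_left conv_tilde_right smultf_def assms(2))
  qed
qed

lemma is_char_add: "is_char \<psi> \<Longrightarrow> \<psi> (a + b) = \<psi> a * \<psi> b"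
  by (simp add: is_char_def)

lemma is_char_0:
  assumes "is_char \<psi>"
  shows "\<psi> 0 = 1"
proof -
  have "\<psi> 0 * \<psi> 0 = \<psi> 0 * 1"
    using is_char_add[OF assms, of 0 0] by simp
  moreover have "\<psi> 0 \<noteq> 0"
    using assms by (simp add: is_char_def)
  ultimately show ?thesis by simp
qed

lemma is_char_sum_list: "is_char \<psi> \<Longrightarrow> \<psi> (sum_list (map gg w)) = prod_list (map (\<lambda>r. \<psi> (gg r)) w)"
  by (induction w) (simp_all add: is_char_0 is_char_add)

subsection \<open>The action\<close>

lemma act_single: "act gg ch zs et \<phi> Phiu \<rho> [(1, w, 0)] p = act_term gg ch zs et \<phi> Phiu \<rho> w 0 p"
  by (simp add: act_def fun_eq_iff)

text \<open>The character \<open>\<rho>\<close> of \<open>U\<close> vanishes on every \<open>u\<^sub>v\<close> with \<open>v \<noteq> []\<close>, so of the inner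
  coproduct only the term \<open>u\<^sub>w\<^sub>1 \<otimes> 1\<close> survives.\<close>

lemma act_term_eq:
  "act_term gg ch zs et \<phi> Phiu \<rho> w lam p = (\<lambda>x h.
     sum_list (map (\<lambda>(c, w1, s, w2). c * \<rho> (s + lam) *
        conv gg ch (conv gg ch (PhiU gg ch \<phi> Phiu w1 (s + lam)) p) (PhiSU gg ch zs \<phi> Phiu w2 lam) x h)
       (cop zs et w)))"
  unfolding act_term_def
proof (intro ext arg_cong[where f=sum_list] map_cong refl, clarify)
  fix x h c w1 s w2
  let ?G = "\<lambda>c2 v1 s2. c * c2 * \<rho> (s + lam) *
     conv gg ch (conv gg ch (PhiU gg ch \<phi> Phiu v1 (s2 + s + lam)) p) (PhiSU gg ch zs \<phi> Phiu w2 lam) x h"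
  show "sum_list (map (\<lambda>(c2, v1, s2, v2). c * c2 * (if v2 = [] then \<rho> (s + lam) else 0) *
          conv gg ch (conv gg ch (PhiU gg ch \<phi> Phiu v1 (s2 + s + lam)) p) (PhiSU gg ch zs \<phi> Phiu w2 lam) x h)
          (cop zs et w1)) =
        c * \<rho> (s + lam) * conv gg ch (conv gg ch (PhiU gg ch \<phi> Phiu w1 (s + lam)) p) (PhiSU gg ch zs \<phi> Phiu w2 lam) x h"
    using sum_list_cop_right_Nil[where G="?G" and gg=zs and ch=et and w=w1]
    by (simp add: if_distrib if_distribR cong: if_cong)
qed

locale Phi_map =
  fixes gs :: "'i \<Rightarrow> 'g::ab_group_add" and chis :: "'i \<Rightarrow> 'g \<Rightarrow> 'k::field"
    and zs :: "'i \<Rightarrow> 'l::ab_group_add" and etas :: "'i \<Rightarrow> 'l \<Rightarrow> 'k"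
    and \<phi> :: "'l \<Rightarrow> 'g \<Rightarrow> 'k" and Phiu :: "'i \<Rightarrow> 'i list \<Rightarrow> 'g \<Rightarrow> 'k" and \<rho> :: "'l \<Rightarrow> 'k"
  assumes chi_char: "\<And>j. is_char (chis j)"
    and phi_char: "\<And>z. is_char (\<phi> z)"
    and phi_hom: "\<And>z z'. \<phi> (z + z') = (\<lambda>x. \<phi> z x * \<phi> z' x)"
    and eta_phi: "\<And>j z. etas j z = \<phi> z (gs j)"
    and Phiu_grp: "\<And>j h. Phiu j [] h = 0"
    and Phiu_gen: "\<And>j j'. j \<noteq> j' \<Longrightarrow> Phiu j [j'] 0 = 0"
    and Phiu_cop: "\<And>j v v' h h'.
        prod_list (map (\<lambda>y. chis y h) v') * Phiu j (v @ v') (h + h')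
        = Phiu j v h * tilde (\<phi> (zs j)) v' h' + unit_f v h * Phiu j v' h'"
    and rho_char: "is_char \<rho>"
begin

abbreviation conv_A (infixl "\<star>" 70) where "p \<star> q \<equiv> conv gs chis p q"
abbreviation Phi_grp where "Phi_grp z \<equiv> tilde (\<phi> z)"
abbreviation Phi_word where "Phi_word w \<equiv> prodf gs chis (map Phiu w)"
abbreviation Phi_antipode where "Phi_antipode w \<equiv> PhiSU gs chis zs \<phi> Phiu w 0"
abbreviation act_word where "act_word w p \<equiv> act_term gs chis zs etas \<phi> Phiu \<rho> w 0 p"

text \<open>\<open>Phi_twisted_gen j\<close> is \<open>\<Phi>(z\<^sub>j\<^sup>-\<^sup>1 u\<^sub>j) = - \<Phi>(S u\<^sub>j)\<close>.\<close>

definition Phi_twisted_gen where "Phi_twisted_gen j = Phi_grp (- zs j) \<star> Phiu j"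

lemma phi_0: "\<phi> 0 = (\<lambda>_. 1)"
proof
  fix x
  have "\<phi> 0 x * \<phi> 0 x = \<phi> 0 x * 1"
    using fun_cong[OF phi_hom[of 0 0], of x] by simp
  moreover have "\<phi> 0 x \<noteq> 0"
    using phi_char[of 0] by (simp add: is_char_def)
  ultimately show "\<phi> 0 x = 1" by simp
qed

lemma Phi_grp_0: "Phi_grp 0 = unit_f"
  by (simp add: phi_0 unit_f_eq_tilde)

lemma phi_mult_phi_neg: "\<phi> z x * \<phi> (- z) x = 1"
  using fun_cong[OF phi_hom[of z "- z"], of x] by (simp add: phi_0)

lemma Phiu_single: "Phiu j [a] h = Phiu j [a] 0 * \<phi> (zs j) h"
  using Phiu_cop[where j=j and v="[a]" and v'="[]" and h=0 and h'=h] by (simp add: tilde_def unit_f_def)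

lemma Phiu_Cons_Cons: "Phiu j (a # b # v) h = 0"
proof -
  have "prod_list (map (\<lambda>y. chis y h) (b # v)) * Phiu j (a # b # v) h = 0"
    using Phiu_cop[where j=j and v="[a]" and v'="b # v" and h=h and h'=0] by (simp add: tilde_def unit_f_def)
  moreover have "prod_list (map (\<lambda>y. chis y h) (b # v)) \<noteq> 0"
    using chi_char by (auto simp: prod_list_zero_iff is_char_def)
  ultimately show ?thesis by simp
qed

lemma Phiu_nonzero_imp:
  assumes "Phiu j v h \<noteq> 0"
  shows "v = [j]"
proof (cases v rule: remdups_adj.cases)
  case 1
  with assms show ?thesis by (simp add: Phiu_grp)
next
  case (2 a)
  have "Phiu j [a] 0 \<noteq> 0"
    using assms 2 Phiu_single[of j a h] by (metis mult_zero_left)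
  then have "a = j"
    using Phiu_gen by metis
  with 2 show ?thesis by simp
next
  case (3 a b v)
  with assms show ?thesis by (simp add: Phiu_Cons_Cons)
qed

lemma homogeneous_Phiu: "homogeneous gs (gs j) (Phiu j)"
  unfolding homogeneous_def using Phiu_nonzero_imp by fastforce

lemma homogeneous_Phi_word: "homogeneous gs (sum_list (map gs w)) (Phi_word w)"
  by (rule homogeneous_prodf) (rule homogeneous_Phiu)

lemma Phi_grp_conv_Phi_word:
  "Phi_grp z \<star> (Phi_word w \<star> R) = smultf (word_char etas w z) (Phi_word w \<star> (Phi_grp z \<star> R))"
proof -
  have "Phi_grp z \<star> Phi_word w = smultf (\<phi> z (sum_list (map gs w))) (Phi_word w \<star> Phi_grp z)"
    by (rule tilde_conv_commute[OF homogeneous_Phi_word]) (simp add: is_char_add[OF phi_char])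
  also have "\<phi> z (sum_list (map gs w)) = word_char etas w z"
    by (simp add: is_char_sum_list[OF phi_char] word_char_def eta_phi)
  finally show ?thesis by (simp only: conv_assoc[symmetric] conv_smultf_left)
qed

lemma tilde_conv_Phiu:
  assumes "is_char \<chi>"
  shows "tilde \<chi> \<star> Phiu i = smultf (\<chi> (gs i)) (Phiu i \<star> tilde \<chi>)"
  by (rule tilde_conv_commute[OF homogeneous_Phiu]) (simp add: is_char_add[OF assms])

lemma Phi_antipode_eq:
  "Phi_antipode w = smultf ((-1) ^ length w) (prodf gs chis (map Phi_twisted_gen (rev w)))"
  by (simp add: PhiSU_def Phi_grp_0 conv_unit_f_left Phi_twisted_gen_def[abs_def])

lemma Phi_antipode_Nil: "Phi_antipode [] = unit_f"
  by (simp add: Phi_antipode_eq prodf_Nil smultf_1)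

lemma Phi_antipode_Cons: "Phi_antipode (x # w) = smultf (-1) (Phi_antipode w \<star> Phi_twisted_gen x)"
  by (simp add: Phi_antipode_eq prodf_append prodf_single conv_smultf_left smultf_smultf)

lemma PhiU_eq: "PhiU gs chis \<phi> Phiu w s = Phi_word w \<star> Phi_grp s"
  by (simp add: PhiU_def)

definition act_summand where
  "act_summand p = (\<lambda>(c, w1, s, w2). smultf (c * \<rho> s) (PhiU gs chis \<phi> Phiu w1 s \<star> p \<star> Phi_antipode w2))"

lemma act_word_eq_sum: "act_word w p = (\<lambda>x h. sum_list (map (\<lambda>e. act_summand p e x h) (cop zs etas w)))"
  by (simp add: act_term_eq act_summand_def smultf_def case_prod_unfold)

lemma act_word_single:
  "act_word [x] p = (\<lambda>y h. - \<rho> (zs x) * (Phi_grp (zs x) \<star> p \<star> Phi_twisted_gen x) y h + (Phiu x \<star> p) y h)"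
  by (simp add: act_word_eq_sum act_summand_def PhiU_eq Phi_antipode_Cons Phi_antipode_Nil prodf_Nil
      conv_unit_f_left conv_unit_f_right Phi_grp_0 is_char_0[OF rho_char] conv_smultf_right
      smultf_def fun_eq_iff prodf_single conv_uminus_right)

lemma act_summand_Cons_right:
  "act_summand p (c * word_char etas w1 (zs x), w1, zs x + s, x # w2)
   = smultf (- \<rho> (zs x)) (Phi_grp (zs x) \<star> act_summand p (c, w1, s, w2) \<star> Phi_twisted_gen x)"
proof -
  have "(\<lambda>y. \<phi> (zs x) y * \<phi> s y) = \<phi> (zs x + s)"
    by (simp add: phi_hom)
  moreover have "c * word_char etas w1 (zs x) * \<rho> (zs x + s) * (-1)
      = - \<rho> (zs x) * (c * \<rho> s * word_char etas w1 (zs x))"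
    by (simp add: is_char_add[OF rho_char])
  ultimately show ?thesis
    by (simp only: act_summand_def prod.case PhiU_eq Phi_antipode_Cons conv_smultf_left
        conv_smultf_right smultf_smultf conv_assoc Phi_grp_conv_Phi_word conv_tilde_tilde)
qed

lemma act_summand_Cons_left: "act_summand p (c, x # w1, s, w2) = Phiu x \<star> act_summand p (c, w1, s, w2)"
  by (simp only: act_summand_def prod.case PhiU_eq list.map prodf_Cons conv_assoc conv_smultf_right)

lemma act_word_Cons: "act_word (x # w) p = act_word [x] (act_word w p)"
proof -
  let ?z = "zs x"
  have right: "act_summand p (case e of (c, w1, s, w2) \<Rightarrow>
        (c * prod_list (map (\<lambda>y. etas y ?z) w1), w1, ?z + s, x # w2))
      = smultf (- \<rho> ?z) (Phi_grp ?z \<star> act_summand p e \<star> Phi_twisted_gen x)" for e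
    by (cases e) (simp add: act_summand_Cons_right[unfolded word_char_def])
  have left: "act_summand p (case e of (c, w1, s, w2) \<Rightarrow> (c, x # w1, s, w2))
      = Phiu x \<star> act_summand p e" for e
    by (cases e) (simp add: act_summand_Cons_left)
  have L: "act_word (x # w) p = (\<lambda>y h.
        sum_list (map (\<lambda>e. - \<rho> ?z * (Phi_grp ?z \<star> act_summand p e \<star> Phi_twisted_gen x) y h) (cop zs etas w))
      + sum_list (map (\<lambda>e. (Phiu x \<star> act_summand p e) y h) (cop zs etas w)))"
    by (simp add: act_word_eq_sum map_map o_def right left smultf_def)
  have R: "act_word [x] (act_word w p) = (\<lambda>y h.
        - \<rho> ?z * sum_list (map (\<lambda>e. (Phi_grp ?z \<star> act_summand p e \<star> Phi_twisted_gen x) y h) (cop zs etas w))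
      + sum_list (map (\<lambda>e. (Phiu x \<star> act_summand p e) y h) (cop zs etas w)))"
    unfolding act_word_single act_word_eq_sum[of w] conv_sum_list_right conv_sum_list_left ..
  show ?thesis unfolding L R by (simp only: sum_list_const_mult)
qed

lemma act_word_single_smultf: "act_word [x] (smultf k q) = smultf k (act_word [x] q)"
  by (simp only: act_word_single conv_smultf_left conv_smultf_right) (simp add: smultf_def fun_eq_iff algebra_simps)

lemma act_gen_Phi_word_conv_tilde:
  assumes chi: "is_char \<chi>"
  shows "act_word [i] (Phi_word w \<star> tilde \<chi>) =
    (\<lambda>x h. (Phi_word (i # w) \<star> tilde \<chi>) x h
       - (word_char etas w (zs i) * \<rho> (zs i) * \<chi> (gs i)) * (Phi_word (w @ [i]) \<star> tilde \<chi>) x h)"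
proof -
  have "(\<lambda>x. \<phi> (zs i) x * (\<chi> x * \<phi> (- zs i) x)) = \<chi>"
    using phi_mult_phi_neg[of "zs i"] by (simp add: fun_eq_iff algebra_simps)
  then have twist: "Phi_grp (zs i) \<star> (Phi_word w \<star> tilde \<chi>) \<star> Phi_twisted_gen i
      = smultf (word_char etas w (zs i) * \<chi> (gs i)) (Phi_word w \<star> (Phiu i \<star> tilde \<chi>))"
    by (simp only: Phi_twisted_gen_def conv_assoc Phi_grp_conv_Phi_word conv_tilde_tilde
        tilde_conv_Phiu[OF chi] conv_smultf_right conv_smultf_left smultf_smultf)
  have snoc: "Phi_word (w @ [i]) \<star> tilde \<chi> = Phi_word w \<star> (Phiu i \<star> tilde \<chi>)"
    by (simp only: map_append list.map prodf_append prodf_single conv_assoc)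
  have cons: "Phi_word (i # w) \<star> tilde \<chi> = Phiu i \<star> (Phi_word w \<star> tilde \<chi>)"
    by (simp only: list.map prodf_Cons conv_assoc)
  show ?thesis
    unfolding act_word_single twist snoc cons by (simp add: smultf_def fun_eq_iff algebra_simps)
qed

lemma act_replicate_tilde:
  assumes chi: "is_char \<chi>"
  shows "act_word (replicate t i) (tilde \<chi>) =
    smultf (\<Prod>l<t. 1 - etas i (zs i) ^ l * \<rho> (zs i) * \<chi> (gs i)) (Phi_word (replicate t i) \<star> tilde \<chi>)"
proof (induction t)
  case 0
  show ?case
    by (simp add: act_word_eq_sum act_summand_def PhiU_eq Phi_antipode_Nil prodf_Nil conv_unit_f_left
        conv_unit_f_right Phi_grp_0 is_char_0[OF rho_char] smultf_def fun_eq_iff)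
next
  case (Suc t)
  let ?k = "\<Prod>l<t. 1 - etas i (zs i) ^ l * \<rho> (zs i) * \<chi> (gs i)"
  have "act_word (replicate (Suc t) i) (tilde \<chi>) = smultf ?k (act_word [i] (Phi_word (replicate t i) \<star> tilde \<chi>))"
    by (simp only: replicate_Suc act_word_Cons[of i "replicate t i"] Suc act_word_single_smultf)
  also have "\<dots> = smultf ?k (\<lambda>x h. (Phi_word (i # replicate t i) \<star> tilde \<chi>) x h
       - (etas i (zs i) ^ t * \<rho> (zs i) * \<chi> (gs i)) * (Phi_word (i # replicate t i) \<star> tilde \<chi>) x h)"
    by (simp only: act_gen_Phi_word_conv_tilde[OF chi] replicate_append_same) (simp add: word_char_def)
  also have "\<dots> = smultf (\<Prod>l<Suc t. 1 - etas i (zs i) ^ l * \<rho> (zs i) * \<chi> (gs i))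
      (Phi_word (replicate (Suc t) i) \<star> tilde \<chi>)"
    by (simp add: smultf_def fun_eq_iff algebra_simps)
  finally show ?case .
qed

end

theorem proposition2p3:
  fixes zs :: "'i::finite \<Rightarrow> 'l::ab_group_add" and gs :: "'i \<Rightarrow> 'g::ab_group_add"
    and etas :: "'i \<Rightarrow> 'l \<Rightarrow> 'k::field_char_0" and chis :: "'i \<Rightarrow> 'g \<Rightarrow> 'k"
    and \<phi> :: "'l \<Rightarrow> 'g \<Rightarrow> 'k" and ls :: "'i \<Rightarrow> 'k"
    and Phiu :: "'i \<Rightarrow> 'i list \<Rightarrow> 'g \<Rightarrow> 'k"
    and \<rho> :: "'l \<Rightarrow> 'k" and \<chi> :: "'g \<Rightarrow> 'k" and i :: 'i and w :: "'i list"
  assumes alg_closed: "\<forall>p :: 'k poly. degree p > 0 \<longrightarrow> (\<exists>x. poly p x = 0)"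
    and eta_char: "\<forall>j. is_char (etas j) \<and> etas j \<noteq> (\<lambda>_. 1)"
    and chi_char: "\<forall>j. is_char (chis j) \<and> chis j \<noteq> (\<lambda>_. 1)"
    and phi_char: "\<forall>z. is_char (\<phi> z)"
    and phi_hom: "\<forall>z z'. \<phi> (z + z') = (\<lambda>x. \<phi> z x * \<phi> z' x)"
    and phi_z: "\<forall>j. \<phi> (zs j) = (\<lambda>x. inverse (chis j x))"
    and eta_phi: "\<forall>j z. etas j z = \<phi> z (gs j)"
    and ls_nz: "\<forall>j. ls j \<noteq> 0"
    and Phiu_grp: "\<forall>j h. Phiu j [] h = 0"
    and Phiu_gen: "\<forall>j j'. Phiu j [j'] 0 = (if j = j' then ls j else 0)"
    and Phiu_cop: "\<forall>j v v' h h'.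
        prod_list (map (\<lambda>y. chis y h) v') * Phiu j (v @ v') (h + h')
        = Phiu j v h * tilde (\<phi> (zs j)) v' h' + unit_f v h * Phiu j v' h'"
    and rho_char: "is_char \<rho>"
    and chi_char': "is_char \<chi>"
    and w_ne: "w \<noteq> []"
  shows
   "act gs chis zs etas \<phi> Phiu \<rho> [(1, [i], 0)] (tilde \<chi>)
      = smultf (1 - \<rho> (zs i) * \<chi> (gs i)) (conv gs chis (Phiu i) (tilde \<chi>))
    \<and> act gs chis zs etas \<phi> Phiu \<rho> [(1, [i], 0)]
        (conv gs chis (PhiU gs chis \<phi> Phiu w 0) (tilde \<chi>))
      = conv gs chis
          (PhiComb gs chis \<phi> Phiu
             [(1, i # w, 0),
              (- (prod_list (map (\<lambda>r. etas r (zs i)) w) * \<rho> (zs i) * \<chi> (gs i)), w @ [i], 0)])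
          (tilde \<chi>)
    \<and> act gs chis zs etas \<phi> Phiu \<rho> [(1, replicate (length w) i, 0)] (tilde \<chi>)
      = smultf (\<Prod>l<length w. 1 - etas i (zs i) ^ l * \<rho> (zs i) * \<chi> (gs i))
          (conv gs chis (PhiU gs chis \<phi> Phiu (replicate (length w) i) 0) (tilde \<chi>))"
proof -
  interpret Phi_map gs chis zs etas \<phi> Phiu \<rho>
    by unfold_locales
      (simp_all add: chi_char phi_char phi_hom eta_phi Phiu_grp Phiu_gen Phiu_cop rho_char)
  have PhiU_0: "PhiU gs chis \<phi> Phiu v 0 = Phi_word v" for v
    by (simp add: PhiU_eq Phi_grp_0 conv_unit_f_right)
  let ?k = "- (prod_list (map (\<lambda>r. etas r (zs i)) w) * \<rho> (zs i) * \<chi> (gs i))"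
  have comb: "PhiComb gs chis \<phi> Phiu [(1, i # w, 0), (?k, w @ [i], 0)]
      = (\<lambda>x h. Phi_word (i # w) x h + smultf ?k (Phi_word (w @ [i])) x h)"
    by (simp add: PhiComb_def PhiU_0 smultf_def fun_eq_iff)
  have b: "act gs chis zs etas \<phi> Phiu \<rho> [(1, [i], 0)] (Phi_word w \<star> tilde \<chi>)
      = PhiComb gs chis \<phi> Phiu [(1, i # w, 0), (?k, w @ [i], 0)] \<star> tilde \<chi>"
    unfolding act_single act_gen_Phi_word_conv_tilde[OF chi_char'] comb conv_add_left conv_smultf_left
    by (simp add: smultf_def word_char_def fun_eq_iff)
  show ?thesis
    using act_replicate_tilde[OF chi_char', of 1 i] act_replicate_tilde[OF chi_char', of "length w" i] b
    by (simp add: act_single PhiU_0 prodf_single)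
qed

end
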